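(* Let $q$ be a prime power, $l\ge1$, $t=q^l$, $G_1(x)=x^{t-1}+1$, $G_2(x)=x^t+x$, and $L_1^*=\{\alpha\in GF(t^2):\ \alpha\neq0,\ G_1(\alpha)\ne0\}$. Then the $q$-ary Goppa codes $\Gamma_2^{(q-1)}=\Gamma(L_1^*,G_2^{q-1})$ and $\Gamma_1^{*(q-1)}=\Gamma(L_1^*,G_1^{q-1})$ have equal parity-check matrices, i.e., they coincide as codes.
   Context: For a set $L=\{\alpha_1,\dots,\alpha_n\}$ of distinct elements of $GF(t^2)$ and $P\in GF(t^2)[x]$ with $P(\alpha_k)\neq0$ for all $k$, the $q$-ary Goppa code is $\Gamma(L,P)=\{c\in GF(q)^n:\ \sum_k c_k\alpha_k^s/P(\alpha_k)=0 \text{ for } s=0,\dots,\deg P-1\}$. *)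

theory Defs
  imports "HOL-Computational_Algebra.Polynomial"
begin

text \<open>The ambient field GF(t^2) is a finite field type 'a.  A codeword with coordinates indexed by
  the locator set L is a function c :: 'a \<Rightarrow> 'a, with c \<alpha> \<in> GF(q) for \<alpha> \<in> L
  and c \<alpha> = 0 for \<alpha> \<notin> L (extensional representation).\<close>

definition subfield_GF :: "nat \<Rightarrow> 'a::field set" where
  "subfield_GF q = {x. x ^ q = x}"

definition goppa_code :: "nat \<Rightarrow> 'a::field set \<Rightarrow> 'a poly \<Rightarrow> ('a \<Rightarrow> 'a) set" where
  "goppa_code q L P =
     {c. (\<forall>\<alpha>. \<alpha> \<notin> L \<longrightarrow> c \<alpha> = 0) \<and> (\<forall>\<alpha>\<in>L. c \<alpha> \<in> subfield_GF q) \<and>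
         (\<forall>s < degree P. (\<Sum>\<alpha>\<in>L. c \<alpha> * \<alpha> ^ s / poly P \<alpha>) = 0)}"

end

theory Submission
  imports Defs "HOL-Computational_Algebra.Primes"
begin

text \<open>Write \<open>tr a = a ^ t + a\<close> for the trace of GF(t^2) over GF(t). Since \<open>G2 = x G1\<close>, both
  codes are cut out by the syndromes \<open>S e = (\<Sum>a\<in>L. c a * a ^ e / tr a ^ (q - 1))\<close>: the code of
  \<open>G1 ^ (q - 1)\<close> asks \<open>S e = 0\<close> for \<open>q - 1 \<le> e < t (q - 1)\<close>, that of \<open>G2 ^ (q - 1)\<close> also for
  \<open>e < q - 1\<close>. As \<open>c a\<close> lies in GF(q) and \<open>tr a\<close> in GF(t), the Frobenius map gives
  \<open>S e ^ t = S (e t)\<close>, exponents being read modulo \<open>t^2 - 1\<close>; this settles \<open>0 < e < q - 1\<close>.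
  For \<open>e = 0\<close> let \<open>Q = t / q\<close>: then \<open>S 0 = (\<Sum>a\<in>L. c a * tr a ^ (Q - 1)) ^ q\<close>, and expanding
  \<open>tr a ^ (Q - 1) = tr a ^ Q * tr a ^ (q - 2) / tr a ^ (q - 1)\<close> by the Frobenius map at \<open>Q\<close> and
  the binomial theorem writes the inner sum as a combination of syndromes that already vanish.\<close>

lemma of_nat_card_UNIV_eq_0: "of_nat (card (UNIV :: 'a set)) = (0 :: 'a :: {finite, ring_1})"
proof -
  have "(\<Sum>y\<in>UNIV. 1 + y) = (\<Sum>y\<in>(UNIV :: 'a set). y)"
    by (rule sum.reindex_bij_witness[of _ "\<lambda>y. y - 1" "\<lambda>y. 1 + y"]) auto
  thus ?thesis
    by (simp add: sum.distrib)
qed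

lemma CHAR_eq_of_card_eq_prime_power:
  assumes "prime p" and "card (UNIV :: 'a :: {finite, field} set) = p ^ k"
  shows "CHAR('a) = p"
proof -
  have "prime CHAR('a)"
    by (rule prime_CHAR_semidom[OF finite_imp_CHAR_pos]) simp
  moreover have "CHAR('a) dvd p ^ k"
    using of_nat_card_UNIV_eq_0[where 'a = 'a] assms(2) of_nat_eq_0_iff_char_dvd by metis
  ultimately show ?thesis
    using assms(1) prime_dvd_power primes_dvd_imp_eq by blast
qed

lemma power_card_UNIV_minus_1_eq_1:
  fixes x :: "'a :: {finite, field}"
  assumes "x \<noteq> 0"
  shows "x ^ (card (UNIV :: 'a set) - 1) = 1"
proof -
  let ?U = "UNIV - {0 :: 'a}"
  have "x ^ card ?U * \<Prod>?U = (\<Prod>y\<in>?U. x * y)"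
    by (simp add: prod.distrib)
  also have "\<dots> = \<Prod>?U"
    using assms by (intro prod.reindex_bij_witness[of _ "\<lambda>y. y / x" "\<lambda>y. x * y"]) auto
  finally have "x ^ card ?U = 1"
    by simp
  thus ?thesis
    by (simp add: card_Diff_singleton)
qed

lemma power_card_UNIV_eq_self:
  fixes x :: "'a :: {finite, field}"
  shows "x ^ card (UNIV :: 'a set) = x"
proof (cases "x = 0")
  case False
  have "card (UNIV :: 'a set) = Suc (card (UNIV :: 'a set) - 1)"
    using finite_UNIV_card_ge_0[where 'a = 'a] by simp
  hence "x ^ card (UNIV :: 'a set) = x * x ^ (card (UNIV :: 'a set) - 1)"
    by (metis power_Suc)
  thus ?thesis
    using power_card_UNIV_minus_1_eq_1[OF False] by simp
qed (use finite_UNIV_card_ge_0[where 'a = 'a] in simp)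

locale trace_goppa =
  fixes m l q t :: nat and L :: "'a :: field set" and c :: "'a \<Rightarrow> 'a"
  assumes prime_CHAR: "prime CHAR('a)"
    and m_pos: "m \<ge> 1" and l_pos: "l \<ge> 1"
    and q_eq: "q = CHAR('a) ^ m" and t_eq: "t = q ^ l"
    and power_tt_eq_self: "(x :: 'a) ^ (t * t) = x"
    and tr_nonzero: "a \<in> L \<Longrightarrow> a ^ t + a \<noteq> 0"
    and c_in_GF: "a \<in> L \<Longrightarrow> c a \<in> subfield_GF q"
begin

definition tr :: "'a \<Rightarrow> 'a" where
  "tr a = a ^ t + a"

definition syndrome :: "nat \<Rightarrow> 'a" where
  "syndrome e = (\<Sum>a\<in>L. c a * a ^ e / tr a ^ (q - 1))"

definition Q :: nat where
  "Q = q ^ (l - 1)"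

lemma q_ge_2: "q \<ge> 2"
proof -
  have "CHAR('a) \<ge> 2"
    using prime_CHAR prime_ge_2_nat by blast
  moreover have "CHAR('a) \<le> q"
    unfolding q_eq using m_pos prime_gt_0_nat[OF prime_CHAR] by (intro self_le_power) auto
  ultimately show ?thesis
    by linarith
qed

lemma q_mult_Q: "q * Q = t"
  using l_pos by (simp add: Q_def t_eq flip: power_Suc)

lemma Q_pos: "Q \<ge> 1"
  using q_ge_2 by (simp add: Q_def)

lemma q_le_t: "q \<le> t"
  using q_mult_Q Q_pos by (metis mult_le_mono2 nat_mult_1_right)

lemma t_pos: "t \<ge> 1"
  using q_le_t q_ge_2 by linarith

lemma Q_plus_q_minus_2_less_t: "Q + (q - 2) < t"
proof -
  have "t = Q + (q - 1) * Q"
    using q_mult_Q q_ge_2 by (cases q) auto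
  moreover have "q - 1 \<le> (q - 1) * Q"
    using Q_pos by simp
  ultimately show ?thesis
    using q_ge_2 by linarith
qed

lemma frobenius_t: "(x + y :: 'a) ^ t = x ^ t + y ^ t"
  by (rule freshmans_dream'[OF prime_CHAR, of _ "m * l"]) (simp add: t_eq q_eq power_mult)

lemma frobenius_Q: "(x + y :: 'a) ^ Q = x ^ Q + y ^ Q"
proof (rule freshmans_dream'[OF prime_CHAR])
  show "Q = CHAR('a) ^ (m * (l - 1))"
    unfolding Q_def by (simp add: q_eq power_mult)
qed

lemma sum_power_t: "sum f B ^ t = (\<Sum>i\<in>B. f i ^ t :: 'a)"
  by (rule freshmans_dream_sum'[OF prime_CHAR, of _ "m * l"]) (simp add: t_eq q_eq power_mult)

lemma sum_power_q: "sum f B ^ q = (\<Sum>i\<in>B. f i ^ q :: 'a)"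
  by (rule freshmans_dream_sum'[OF prime_CHAR q_eq])

lemma c_power_t: "a \<in> L \<Longrightarrow> c a ^ t = c a"
  unfolding t_eq
proof (induction l)
  case (Suc l)
  thus ?case
    using c_in_GF[of a] by (simp add: subfield_GF_def power_mult)
qed simp

lemma tr_power_t: "tr x ^ t = tr x"
  using power_tt_eq_self[of x] by (simp add: tr_def frobenius_t flip: power_mult)

lemma tr_power_t_minus_1:
  assumes "a \<in> L"
  shows "tr a ^ (t - 1) = 1"
proof -
  have "tr a * tr a ^ (t - 1) = tr a * 1"
    using tr_power_t[of a] t_pos by (cases t) auto
  thus ?thesis
    using tr_nonzero[OF assms] by (simp add: tr_def)
qed

lemma tr_eq_mult: "tr x = x * (x ^ (t - 1) + 1)"
  unfolding tr_def using t_pos by (cases t) (auto simp: distrib_left)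

lemma L_nonzero:
  assumes "a \<in> L"
  shows "a \<noteq> 0"
proof
  assume "a = 0"
  thus False
    using tr_nonzero[OF assms] t_pos by (simp add: power_0_left)
qed

lemma syndrome_power_t: "syndrome e ^ t = syndrome (e * t)"
proof -
  have "syndrome e ^ t = (\<Sum>a\<in>L. (c a * a ^ e / tr a ^ (q - 1)) ^ t)"
    unfolding syndrome_def sum_power_t ..
  also have "\<dots> = syndrome (e * t)"
    unfolding syndrome_def
  proof (rule sum.cong[OF refl])
    fix a assume "a \<in> L"
    moreover have "(tr a ^ (q - 1)) ^ t = tr a ^ (q - 1)"
      by (metis power_mult mult.commute tr_power_t)
    ultimately show "(c a * a ^ e / tr a ^ (q - 1)) ^ t = c a * a ^ (e * t) / tr a ^ (q - 1)"
      by (simp add: power_divide power_mult_distrib power_mult c_power_t)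
  qed
  finally show ?thesis .
qed

lemma syndrome_shift: "syndrome (e + k * (t * t)) = syndrome (e + k)"
proof -
  have "a ^ (k * (t * t)) = a ^ k" for a :: 'a
    by (metis power_mult power_tt_eq_self)
  hence "a ^ (e + k * (t * t)) = a ^ (e + k)" for a :: 'a
    by (simp add: power_add)
  thus ?thesis
    by (simp add: syndrome_def)
qed

lemma sum_G1_eq_syndrome:
  "(\<Sum>a\<in>L. c a * a ^ s / (a ^ (t - 1) + 1) ^ (q - 1)) = syndrome (s + (q - 1))"
  unfolding syndrome_def
proof (rule sum.cong[OF refl])
  fix a assume "a \<in> L"
  then show "c a * a ^ s / (a ^ (t - 1) + 1) ^ (q - 1) = c a * a ^ (s + (q - 1)) / tr a ^ (q - 1)"
    using L_nonzero by (simp add: tr_eq_mult power_mult_distrib power_add)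
qed

lemma syndrome_0_eq_power_q: "syndrome 0 = (\<Sum>a\<in>L. c a * tr a ^ (Q - 1)) ^ q"
  unfolding sum_power_q syndrome_def
proof (rule sum.cong[OF refl])
  fix a assume a: "a \<in> L"
  have "tr a ^ (t - q) * tr a ^ (q - 1) = tr a ^ (t - 1)"
    using q_le_t q_ge_2 by (simp flip: power_add)
  hence "tr a ^ (t - q) = 1 / tr a ^ (q - 1)"
    using tr_power_t_minus_1[OF a] tr_nonzero[OF a] by (simp add: tr_def field_simps)
  moreover have "(Q - 1) * q = t - q"
    using q_mult_Q by (metis diff_mult_distrib2 mult.commute nat_mult_1_right)
  ultimately show "c a * a ^ 0 / tr a ^ (q - 1) = (c a * tr a ^ (Q - 1)) ^ q"
    using c_in_GF[OF a] by (simp add: subfield_GF_def power_mult_distrib flip: power_mult)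
qed

lemma tr_power_expansion:
  "tr x ^ (Q + (q - 2)) = (\<Sum>k\<le>q - 2. of_nat (q - 2 choose k) *
     (x ^ (t * Q + t * k + (q - 2 - k)) + x ^ (Q + t * k + (q - 2 - k))))"
proof -
  have "tr x ^ Q = x ^ (t * Q) + x ^ Q"
    unfolding tr_def frobenius_Q by (simp add: power_mult)
  moreover have "tr x ^ (q - 2) = (\<Sum>k\<le>q - 2. of_nat (q - 2 choose k) * (x ^ t) ^ k * x ^ (q - 2 - k))"
    unfolding tr_def by (rule binomial_ring)
  ultimately have "tr x ^ (Q + (q - 2)) =
      (x ^ (t * Q) + x ^ Q) * (\<Sum>k\<le>q - 2. of_nat (q - 2 choose k) * (x ^ t) ^ k * x ^ (q - 2 - k))"
    by (simp add: power_add)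
  also have "\<dots> = (\<Sum>k\<le>q - 2. of_nat (q - 2 choose k) *
     (x ^ (t * Q + t * k + (q - 2 - k)) + x ^ (Q + t * k + (q - 2 - k))))"
    unfolding sum_distrib_left
    by (rule sum.cong) (simp_all add: power_add power_mult[symmetric] algebra_simps)
  finally show ?thesis .
qed

lemma sum_c_tr_power_expansion:
  "(\<Sum>a\<in>L. c a * tr a ^ (Q - 1)) = (\<Sum>k\<le>q - 2. of_nat (q - 2 choose k) *
     (syndrome (t * Q + t * k + (q - 2 - k)) + syndrome (Q + t * k + (q - 2 - k))))"
proof -
  have "c a * tr a ^ (Q - 1) = (\<Sum>k\<le>q - 2. of_nat (q - 2 choose k) *
      (c a * a ^ (t * Q + t * k + (q - 2 - k)) / tr a ^ (q - 1) +
       c a * a ^ (Q + t * k + (q - 2 - k)) / tr a ^ (q - 1)))" if a: "a \<in> L" for a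
  proof -
    have "Q + (q - 2) = (Q - 1) + (q - 1)"
      using Q_pos q_ge_2 by linarith
    hence "tr a ^ (Q + (q - 2)) = tr a ^ (Q - 1) * tr a ^ (q - 1)"
      by (simp only: power_add)
    hence "tr a ^ (Q - 1) = tr a ^ (Q + (q - 2)) / tr a ^ (q - 1)"
      using tr_nonzero[OF a] by (simp add: tr_def)
    thus ?thesis
      unfolding tr_power_expansion
      by (simp add: sum_distrib_left sum_divide_distrib algebra_simps add_divide_distrib)
  qed
  hence "(\<Sum>a\<in>L. c a * tr a ^ (Q - 1)) = (\<Sum>a\<in>L. \<Sum>k\<le>q - 2. of_nat (q - 2 choose k) *
      (c a * a ^ (t * Q + t * k + (q - 2 - k)) / tr a ^ (q - 1) +
       c a * a ^ (Q + t * k + (q - 2 - k)) / tr a ^ (q - 1)))"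
    by (rule sum.cong[OF refl])
  also have "\<dots> = (\<Sum>k\<le>q - 2. of_nat (q - 2 choose k) *
     (syndrome (t * Q + t * k + (q - 2 - k)) + syndrome (Q + t * k + (q - 2 - k))))"
    unfolding syndrome_def
    by (subst sum.swap) (simp add: sum_distrib_left sum.distrib distrib_left)
  finally show ?thesis .
qed

lemma exponent_in_upper_range:
  assumes "k \<le> q - 2"
  shows "q - 1 \<le> Q + t * k + (q - 2 - k)" and "Q + t * k + (q - 2 - k) < t * (q - 1)"
proof -
  have "k \<le> t * k"
    using t_pos by simp
  thus "q - 1 \<le> Q + t * k + (q - 2 - k)"
    using Q_pos assms by linarith
  have "t * k \<le> t * (q - 2)"
    using assms by simp
  moreover have "t + t * (q - 2) = t * (q - 1)"
    using q_ge_2 by (cases q) (auto simp: algebra_simps)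
  ultimately show "Q + t * k + (q - 2 - k) < t * (q - 1)"
    using Q_plus_q_minus_2_less_t by linarith
qed

lemma syndrome_pos_eq_0:
  assumes vanish: "\<And>e. q - 1 \<le> e \<Longrightarrow> e < t * (q - 1) \<Longrightarrow> syndrome e = 0"
    and "0 < e" and "e < q - 1"
  shows "syndrome e = 0"
proof -
  have "t \<le> e * t"
    using \<open>0 < e\<close> by simp
  hence "q - 1 \<le> e * t"
    using q_le_t by linarith
  moreover have "e * t < t * (q - 1)"
    using \<open>e < q - 1\<close> t_pos by simp
  ultimately have "syndrome e ^ t = 0"
    unfolding syndrome_power_t by (rule vanish)
  thus ?thesis
    by simp
qed

lemma syndrome_0_eq_0:
  assumes vanish: "\<And>e. q - 1 \<le> e \<Longrightarrow> e < t * (q - 1) \<Longrightarrow> syndrome e = 0"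
  shows "syndrome 0 = 0"
proof -
  have "syndrome (t * Q + t * k + (q - 2 - k)) = 0" if k: "k \<le> q - 2" for k
  proof -
    \<comment> \<open>\<open>t Q + t k + j\<close> is \<open>t\<close> times the upper-range exponent \<open>Q + t j + k\<close>, modulo \<open>t^2 - 1\<close>\<close>
    define j where "j = q - 2 - k"
    have "syndrome (Q + t * j + (q - 2 - j)) = 0"
      using exponent_in_upper_range[of j] vanish by (simp add: j_def)
    moreover have "q - 2 - j = k"
      using k by (simp add: j_def)
    ultimately have "syndrome ((Q + t * j + k) * t) = 0"
      using t_pos by (simp flip: syndrome_power_t)
    moreover have "(Q + t * j + k) * t = (t * Q + t * k) + j * (t * t)"
      by (simp add: algebra_simps)
    ultimately show ?thesis
      using syndrome_shift[of "t * Q + t * k" j] by (simp add: j_def)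
  qed
  moreover have "syndrome (Q + t * k + (q - 2 - k)) = 0" if "k \<le> q - 2" for k
    using exponent_in_upper_range[OF that] vanish by blast
  ultimately have "(\<Sum>a\<in>L. c a * tr a ^ (Q - 1)) = 0"
    unfolding sum_c_tr_power_expansion by simp
  thus ?thesis
    using q_ge_2 by (simp add: syndrome_0_eq_power_q)
qed

lemma syndromes_vanish_if_vanish_above_q_minus_1:
  assumes vanish: "\<And>e. q - 1 \<le> e \<Longrightarrow> e < t * (q - 1) \<Longrightarrow> syndrome e = 0"
    and "e < t * (q - 1)"
  shows "syndrome e = 0"
  using vanish[OF _ assms(2)] syndrome_0_eq_0[OF vanish] syndrome_pos_eq_0[OF vanish, of e]
  by (cases "e = 0"; cases "q - 1 \<le> e") auto

lemma goppa_conditions_iff: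
  "(\<forall>s < t * (q - 1). syndrome s = 0) \<longleftrightarrow>
   (\<forall>s < (t - 1) * (q - 1). (\<Sum>a\<in>L. c a * a ^ s / (a ^ (t - 1) + 1) ^ (q - 1)) = 0)"
proof -
  have t_split: "t * (q - 1) = (t - 1) * (q - 1) + (q - 1)"
    using t_pos by (cases t) auto
  show ?thesis
    unfolding sum_G1_eq_syndrome
  proof (intro iffI allI impI)
    fix s assume "\<forall>s < t * (q - 1). syndrome s = 0" and "s < (t - 1) * (q - 1)"
    moreover have "s + (q - 1) < t * (q - 1)"
      using \<open>s < (t - 1) * (q - 1)\<close> t_split by linarith
    ultimately show "syndrome (s + (q - 1)) = 0"
      by blast
  next
    fix e assume shifted: "\<forall>s < (t - 1) * (q - 1). syndrome (s + (q - 1)) = 0"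
      and "e < t * (q - 1)"
    have "syndrome e = 0" if "q - 1 \<le> e" "e < t * (q - 1)" for e
    proof -
      have "e - (q - 1) < (t - 1) * (q - 1)"
        using that t_split by linarith
      hence "syndrome (e - (q - 1) + (q - 1)) = 0"
        using shifted by blast
      thus ?thesis
        using \<open>q - 1 \<le> e\<close> by simp
    qed
    thus "syndrome e = 0"
      using syndromes_vanish_if_vanish_above_q_minus_1 \<open>e < t * (q - 1)\<close> by blast
  qed
qed

end

lemma trace_goppa_of_card_UNIV:
  fixes L :: "'a :: {finite, field} set"
  assumes "prime p" and "m \<ge> 1" and "q = p ^ m" and "l \<ge> 1" and "t = q ^ l"
    and "card (UNIV :: 'a set) = t ^ 2"
    and "\<And>a. a \<in> L \<Longrightarrow> a ^ t + a \<noteq> 0" and "\<And>a. a \<in> L \<Longrightarrow> c a \<in> subfield_GF q"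
  shows "trace_goppa m l q t L c"
proof -
  have "CHAR('a) = p"
    using CHAR_eq_of_card_eq_prime_power[OF assms(1), of "m * l * 2"] assms(3,5,6)
    by (simp add: power_mult)
  moreover have "x ^ (t * t) = x" for x :: 'a
    using power_card_UNIV_eq_self[of x] assms(6) by (simp add: power2_eq_square)
  ultimately show ?thesis
    using assms by unfold_locales auto
qed

lemma degree_power_monom_plus:
  fixes P :: "'a :: idom poly"
  assumes "degree P < n"
  shows "degree ((monom 1 n + P) ^ k) = n * k"
proof -
  have "degree (monom 1 n + P) = n"
    using assms by (simp add: degree_add_eq_left degree_monom_eq)
  moreover have "monom 1 n + P \<noteq> 0"
    using assms calculation by auto
  ultimately show ?thesis
    by (simp add: degree_power_eq)
qed

lemma goppa_code_eqI:
  fixes L :: "'a :: field set"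
  assumes "\<And>c :: 'a \<Rightarrow> 'a. \<forall>a\<in>L. c a \<in> subfield_GF q \<Longrightarrow>
    (\<forall>s < degree P. (\<Sum>a\<in>L. c a * a ^ s / poly P a) = 0) \<longleftrightarrow>
    (\<forall>s < degree P'. (\<Sum>a\<in>L. c a * a ^ s / poly P' a) = 0)"
  shows "goppa_code q L P = goppa_code q L P'"
  unfolding goppa_code_def by (intro Collect_cong conj_cong refl) (rule assms)

theorem lemma5:
  fixes q l t p m :: nat
    and L1 :: "'a::{finite, field} set"
    and G1 G2 :: "'a poly"
  assumes "prime p" and "m \<ge> 1" and "q = p ^ m"
    and "l \<ge> 1" and "t = q ^ l"
    and "card (UNIV :: 'a set) = t ^ 2"
    and "G1 = monom 1 (t - 1) + 1"
    and "G2 = monom 1 t + monom 1 1"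
    and "L1 = {\<alpha>. \<alpha> \<noteq> 0 \<and> poly G1 \<alpha> \<noteq> 0}"
  shows "goppa_code q L1 (G2 ^ (q - 1)) = goppa_code q L1 (G1 ^ (q - 1))"
proof (rule goppa_code_eqI)
  have "2 \<le> p"
    using prime_ge_2_nat[OF assms(1)] .
  hence "p \<le> q" and "q \<le> t"
    using assms(2-5) by (auto intro!: self_le_power)
  hence "2 \<le> t"
    using \<open>2 \<le> p\<close> by linarith
  hence degrees: "degree (G1 ^ (q - 1)) = (t - 1) * (q - 1)" "degree (G2 ^ (q - 1)) = t * (q - 1)"
    unfolding assms(7,8) by (simp_all add: degree_power_monom_plus degree_monom_eq)
  have poly_G1: "poly G1 a = a ^ (t - 1) + 1" and poly_G2: "poly G2 a = a ^ t + a" for a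
    by (simp_all add: assms(7,8) poly_monom)
  have "a ^ t + a = a * poly G1 a" for a
    using \<open>2 \<le> t\<close> by (cases t) (auto simp: poly_G1 distrib_left)
  hence tr_nonzero: "a ^ t + a \<noteq> 0" if "a \<in> L1" for a
    using that by (simp add: assms(9))
  fix c :: "'a \<Rightarrow> 'a"
  assume "\<forall>a\<in>L1. c a \<in> subfield_GF q"
  then interpret trace_goppa m l q t L1 c
    using trace_goppa_of_card_UNIV[OF assms(1-6) tr_nonzero] by blast
  show "(\<forall>s < degree (G2 ^ (q - 1)). (\<Sum>a\<in>L1. c a * a ^ s / poly (G2 ^ (q - 1)) a) = 0) \<longleftrightarrow>
    (\<forall>s < degree (G1 ^ (q - 1)). (\<Sum>a\<in>L1. c a * a ^ s / poly (G1 ^ (q - 1)) a) = 0)"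
    using goppa_conditions_iff
    unfolding degrees poly_power poly_G1 poly_G2 syndrome_def tr_def .
qed

end
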